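(* Let $k\ge 2$ be an integer. Then $\alpha_{2k+t,\,k-1}=k$ for all integers $t\ge 0$.
   Context: Let $\mathbb{K}$ be a field. For $n\ge 3$, $Q_n$ is the cycle graph on vertices $1,\dots,n$ (edges $\{i,i+1\}$ for $1\le i\le n-1$ and $\{n,1\}$); $B_n$ is the simplicial complex on $\{0,\dots,n+1\}$ whose facets are $\{0,i,j\}$ and $\{n+1,i,j\}$ for each edge $\{i,j\}$ of $Q_n$ (boundary of the bipyramid over the $n$-gon); $I_{B_n}\subset R=\mathbb{K}[x_0,\dots,x_{n+1}]$ is its Stanley-Reisner ideal, generated by $\prod_{i\in\tau}x_i$ over non-faces $\tau$. For a homogeneous ideal $I$, $I^{(m)}=R\cap\bigcap_{P\in\mathrm{Ass}(I)}I^mR_P$, $\alpha(I)=\min\{t:I_t\ne0\}$, and $\alpha_{n,m}:=\alpha(I_{B_n}^{(m)})$. *)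

theory Defs
  imports Main "HOL-Library.Poly_Mapping"
begin

text \<open>Polynomials over a coefficient ring 'a in the variables x_0, x_1, ... :
  finitely supported maps from monomials (finitely supported exponent vectors) to coefficients.\<close>
type_synonym 'a mpoly = "(nat \<Rightarrow>\<^sub>0 nat) \<Rightarrow>\<^sub>0 'a"

text \<open>The polynomial ring K[x_i : i \<in> V] as a subset of all polynomials.\<close>
definition PR :: "nat set \<Rightarrow> ('a::zero) mpoly set" where
  "PR V = {p::'a mpoly. \<forall>m\<in>Poly_Mapping.keys p. Poly_Mapping.keys m \<subseteq> V}"

definition Var :: "nat \<Rightarrow> ('a::{zero,one}) mpoly" where
  "Var i = Poly_Mapping.single (Poly_Mapping.single i 1) 1"

inductive_set gen_ideal :: "nat set \<Rightarrow> ('a::comm_ring_1) mpoly set \<Rightarrow> 'a mpoly set"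
  for V G where
  zero: "0 \<in> gen_ideal V G"
| gen: "g \<in> G \<Longrightarrow> r \<in> PR V \<Longrightarrow> r * g \<in> gen_ideal V G"
| add: "a \<in> gen_ideal V G \<Longrightarrow> b \<in> gen_ideal V G \<Longrightarrow> a + b \<in> gen_ideal V G"

fun ideal_pow :: "nat set \<Rightarrow> ('a::comm_ring_1) mpoly set \<Rightarrow> nat \<Rightarrow> 'a mpoly set" where
  "ideal_pow V I 0 = PR V"
| "ideal_pow V I (Suc m) = gen_ideal V {a * b | a b. a \<in> ideal_pow V I m \<and> b \<in> I}"

definition is_ideal :: "nat set \<Rightarrow> ('a::comm_ring_1) mpoly set \<Rightarrow> bool" where
  "is_ideal V P \<longleftrightarrow> P \<subseteq> PR V \<and> 0 \<in> P \<and> (\<forall>a\<in>P. \<forall>b\<in>P. a + b \<in> P)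
     \<and> (\<forall>a\<in>P. \<forall>r\<in>PR V. r * a \<in> P)"

definition prime_ideal :: "nat set \<Rightarrow> ('a::comm_ring_1) mpoly set \<Rightarrow> bool" where
  "prime_ideal V P \<longleftrightarrow> is_ideal V P \<and> P \<noteq> PR V
     \<and> (\<forall>a\<in>PR V. \<forall>b\<in>PR V. a * b \<in> P \<longrightarrow> a \<in> P \<or> b \<in> P)"

definition Ass :: "nat set \<Rightarrow> ('a::comm_ring_1) mpoly set \<Rightarrow> 'a mpoly set set" where
  "Ass V I = {P. prime_ideal V P \<and> (\<exists>h\<in>PR V. P = {g\<in>PR V. g * h \<in> I})}"

text \<open>Symbolic power I^(m) = R \<inter> \<Inter>_{P \<in> Ass I} I^m R_P; an element f of R lies in
  I^m R_P iff s f \<in> I^m for some s \<in> R - P.\<close>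
definition symb_pow :: "nat set \<Rightarrow> ('a::comm_ring_1) mpoly set \<Rightarrow> nat \<Rightarrow> 'a mpoly set" where
  "symb_pow V I m = {f\<in>PR V. \<forall>P\<in>Ass V I. \<exists>s\<in>PR V - P. s * f \<in> ideal_pow V I m}"

definition mdeg :: "(nat \<Rightarrow>\<^sub>0 nat) \<Rightarrow> nat" where
  "mdeg m = (\<Sum>i\<in>Poly_Mapping.keys m. Poly_Mapping.lookup m i)"

definition homogeneous :: "nat \<Rightarrow> ('a::zero) mpoly \<Rightarrow> bool" where
  "homogeneous t f \<longleftrightarrow> (\<forall>m\<in>Poly_Mapping.keys f. mdeg m = t)"

definition alpha :: "('a::zero) mpoly set \<Rightarrow> nat" where
  "alpha I = (LEAST t. \<exists>f\<in>I. f \<noteq> 0 \<and> homogeneous t f)"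

definition Q_edges :: "nat \<Rightarrow> nat set set" where
  "Q_edges n = {{i, i + 1} | i. 1 \<le> i \<and> i \<le> n - 1} \<union> {{n, 1}}"

definition B_facets :: "nat \<Rightarrow> nat set set" where
  "B_facets n = {insert 0 e | e. e \<in> Q_edges n} \<union> {insert (n + 1) e | e. e \<in> Q_edges n}"

definition B_face :: "nat \<Rightarrow> nat set \<Rightarrow> bool" where
  "B_face n \<sigma> \<longleftrightarrow> (\<exists>F\<in>B_facets n. \<sigma> \<subseteq> F)"

definition SR_ideal :: "nat \<Rightarrow> ('a::comm_ring_1) mpoly set" where
  "SR_ideal n = gen_ideal {0..n+1}
     {(\<Prod>i\<in>\<tau>. Var i) | \<tau>. \<tau> \<subseteq> {0..n+1} \<and> \<not> B_face n \<tau>}"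

definition alpha_nm :: "'a::field itself \<Rightarrow> nat \<Rightarrow> nat \<Rightarrow> nat" where
  "alpha_nm _ n m = alpha (symb_pow {0..n+1} (SR_ideal n :: 'a mpoly set) m)"

end

theory Submission
  imports Defs
begin

text \<open>Write \<open>I = I\<^sub>B\<^sub>n\<close>. For a facet F the monomial prime \<open>P\<^sub>F = (x\<^sub>j : j \<notin> F)\<close> equals
  \<open>(I : x\<^sub>F)\<close>, hence is associated, and every monomial of \<open>I\<^sup>m\<close> has degree \<open>\<ge> m\<close> outside F.
  If \<open>s \<notin> P\<^sub>F\<close> and \<open>s f \<in> I\<^sup>m\<close>, then s has a monomial supported on F, so the least degree outside F
  of a monomial of f survives in \<open>s f\<close> and is \<open>\<ge> m\<close>. A monomial of degree \<open>\<le> m\<close> meets some facet and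
  so has degree \<open>< m\<close> outside it; thus \<open>\<alpha>(I\<^sup>(\<^sup>m\<^sup>)) > m\<close> for \<open>m \<ge> 1\<close>.

  Conversely, \<open>f = x\<^sub>1 x\<^sub>3 \<cdots> x\<^sub>2\<^sub>k\<^sub>-\<^sub>1\<close> lies in \<open>I\<^sup>(\<^sup>k\<^sup>-\<^sup>1\<^sup>)\<close> when \<open>2k \<le> n\<close>: an associated prime
  \<open>(I : h)\<close> misses \<open>x\<^sub>e\<close> for some edge e of the cycle (h has a monomial supported on a facet
  containing e), and as the odd vertices meet e at most once, \<open>x\<^sub>e\<^sup>k\<^sup>-\<^sup>1 f\<close> is divisible by a
  product of \<open>k - 1\<close> generators \<open>x\<^sub>e x\<^sub>j\<close> of I.\<close>

abbreviation monom :: "(nat \<Rightarrow>\<^sub>0 nat) \<Rightarrow> 'a::comm_ring_1 mpoly" where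
  "monom u \<equiv> Poly_Mapping.single u 1"

lemma keys_add_exponents:
  "Poly_Mapping.keys (x + y :: 'k \<Rightarrow>\<^sub>0 nat) = Poly_Mapping.keys x \<union> Poly_Mapping.keys y"
  by (auto simp: in_keys_iff lookup_add)

lemma lookup_monom_mult:
  "Poly_Mapping.lookup (monom v * h) (v + u) = Poly_Mapping.lookup (h :: 'a::comm_ring_1 mpoly) u"
proof -
  have "Poly_Mapping.lookup (monom v * h) (v + u)
      = (\<Sum>l. (1 when v = l) * (\<Sum>q. Poly_Mapping.lookup h q when v + u = l + q))"
    by (simp only: lookup_mult lookup_single)
  also have "\<dots> = (\<Sum>l. (\<Sum>q. Poly_Mapping.lookup h q when v + u = l + q) when v = l)"
    by (simp only: when_mult mult_1_left)
  also have "\<dots> = (\<Sum>q. Poly_Mapping.lookup h q when u = q)"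
    by (simp only: Sum_any_when_equal' add_left_cancel)
  also have "\<dots> = Poly_Mapping.lookup h u"
    by (rule Sum_any_when_equal')
  finally show ?thesis .
qed

lemma in_keys_monom_mult:
  "u \<in> Poly_Mapping.keys h \<Longrightarrow> v + u \<in> Poly_Mapping.keys (monom v * (h :: 'a::comm_ring_1 mpoly))"
  by (simp add: in_keys_iff lookup_monom_mult)

lemma PR_add: "a \<in> PR V \<Longrightarrow> b \<in> PR V \<Longrightarrow> a + b \<in> PR V"
  unfolding PR_def using keys_add[of a b] by blast

lemma PR_mult: "a \<in> PR V \<Longrightarrow> b \<in> PR V \<Longrightarrow> (a :: 'a::comm_ring_1 mpoly) * b \<in> PR V"
  unfolding PR_def using keys_mult[of a b] by (fastforce simp: keys_add_exponents)

lemma PR_single: "Poly_Mapping.keys u \<subseteq> V \<Longrightarrow> Poly_Mapping.single u c \<in> PR V"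
  unfolding PR_def by auto

lemma PR_one: "(1 :: 'a::comm_ring_1 mpoly) \<in> PR V"
  unfolding PR_def by auto

lemma PR_power: "a \<in> PR V \<Longrightarrow> (a :: 'a::comm_ring_1 mpoly) ^ j \<in> PR V"
  by (induction j) (simp_all add: PR_one PR_mult)

lemma gen_ideal_mult_left:
  assumes "r \<in> PR V"
  shows "a \<in> gen_ideal V G \<Longrightarrow> r * a \<in> gen_ideal V G"
proof (induction a rule: gen_ideal.induct)
  case zero
  then show ?case by (simp add: gen_ideal.zero)
next
  case (gen g r')
  then show ?case
    using gen_ideal.gen[OF gen(1) PR_mult[OF assms gen(2)]] by (simp add: mult.assoc)
next
  case (add a b)
  then show ?case by (simp add: distrib_left gen_ideal.add)
qed

lemma gen_ideal_sum:
  "finite S \<Longrightarrow> (\<And>x. x \<in> S \<Longrightarrow> f x \<in> gen_ideal V G) \<Longrightarrow> sum f S \<in> gen_ideal V G"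
  by (induction S rule: finite_induct) (auto intro: gen_ideal.zero gen_ideal.add)

lemma sum_single_keys:
  "(\<Sum>u\<in>Poly_Mapping.keys p. Poly_Mapping.single u (Poly_Mapping.lookup p u)) = p"
  by (rule poly_mapping_eqI) (simp add: lookup_sum lookup_single when_def in_keys_iff)

lemma gen_ideal_if_monoms_mem:
  assumes "p \<in> PR V" "\<And>u. u \<in> Poly_Mapping.keys p \<Longrightarrow> monom u \<in> gen_ideal V G"
  shows "(p :: 'a::comm_ring_1 mpoly) \<in> gen_ideal V G"
proof -
  have "Poly_Mapping.single u (Poly_Mapping.lookup p u) \<in> gen_ideal V G"
    if "u \<in> Poly_Mapping.keys p" for u
  proof -
    have "Poly_Mapping.single 0 (Poly_Mapping.lookup p u) * monom u \<in> gen_ideal V G"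
      by (rule gen_ideal_mult_left[OF PR_single assms(2)[OF that]]) simp
    then show ?thesis by (simp add: mult_single)
  qed
  then show ?thesis
    using gen_ideal_sum[of "Poly_Mapping.keys p" "\<lambda>u. Poly_Mapping.single u (Poly_Mapping.lookup p u)" V G]
    by (simp add: sum_single_keys)
qed

lemma keys_gen_ideal_invariant:
  assumes "(a :: 'a::comm_ring_1 mpoly) \<in> gen_ideal V G" "u \<in> Poly_Mapping.keys a"
    and "\<And>g u. g \<in> G \<Longrightarrow> u \<in> Poly_Mapping.keys g \<Longrightarrow> Q u"
    and "\<And>u v. Q u \<Longrightarrow> Q (v + u)"
  shows "Q u"
  using assms(1,2)
proof (induction a arbitrary: u rule: gen_ideal.induct)
  case zero
  then show ?case by simp
next
  case (gen g r)
  then obtain x y where "u = x + y" "y \<in> Poly_Mapping.keys g"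
    using keys_mult by blast
  then show ?case using assms(3,4) gen by blast
next
  case (add a b)
  then show ?case using keys_add[of a b] by blast
qed

lemma ideal_pow_mult_left:
  "r \<in> PR V \<Longrightarrow> a \<in> ideal_pow V I m \<Longrightarrow> r * a \<in> ideal_pow V I m"
  by (cases m) (auto simp: PR_mult gen_ideal_mult_left)

lemma ideal_pow_SucI:
  assumes "a \<in> ideal_pow V I m" "b \<in> I"
  shows "(a :: 'a::comm_ring_1 mpoly) * b \<in> ideal_pow V I (Suc m)"
proof -
  have "1 * (a * b) \<in> gen_ideal V {a * b | a b. a \<in> ideal_pow V I m \<and> b \<in> I}"
    using assms by (intro gen_ideal.gen PR_one) blast
  then show ?thesis by simp
qed

lemma prod_mem_ideal_pow:
  "finite K \<Longrightarrow> (\<And>j. j \<in> K \<Longrightarrow> g j \<in> I)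
    \<Longrightarrow> (\<Prod>j\<in>K. g j :: 'a::comm_ring_1 mpoly) \<in> ideal_pow V I (card K)"
proof (induction K rule: finite_induct)
  case empty
  then show ?case by (simp add: PR_one)
next
  case (insert j K)
  then show ?case
    using ideal_pow_SucI[of "\<Prod>j\<in>K. g j" V I "card K" "g j"] by (simp add: mult.commute)
qed

lemma prime_ideal_power_not_mem:
  assumes P: "prime_ideal V P" and a: "a \<in> PR V" "a \<notin> P"
  shows "a ^ j \<notin> P"
proof (induction j)
  case 0
  have "1 \<notin> P"
  proof
    assume "1 \<in> P"
    then have "r \<in> P" if "r \<in> PR V" for r
      using P that unfolding prime_ideal_def is_ideal_def by (metis mult_1_right)
    then show False
      using P unfolding prime_ideal_def is_ideal_def by blast
  qed
  then show ?case by simp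
next
  case (Suc j)
  have "a * a ^ j \<notin> P"
    using P a Suc.IH PR_power[OF a(1), of j] unfolding prime_ideal_def by blast
  then show ?case by simp
qed

lemma alpha_eqI:
  assumes "f \<in> I" "f \<noteq> 0" "homogeneous d f"
    and "\<And>g t. g \<in> I \<Longrightarrow> g \<noteq> 0 \<Longrightarrow> homogeneous t g \<Longrightarrow> d \<le> t"
  shows "alpha I = d"
  unfolding alpha_def using assms by (intro Least_equality) blast+

subsection \<open>Degree outside a set of variables\<close>

definition outdeg :: "nat set \<Rightarrow> (nat \<Rightarrow>\<^sub>0 nat) \<Rightarrow> nat" where
  "outdeg F u = (\<Sum>j\<in>Poly_Mapping.keys u - F. Poly_Mapping.lookup u j)"

lemma outdeg_eq_sum_superset:
  "finite S \<Longrightarrow> Poly_Mapping.keys u \<subseteq> S \<Longrightarrow> outdeg F u = (\<Sum>j\<in>S - F. Poly_Mapping.lookup u j)"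
  unfolding outdeg_def by (rule sum.mono_neutral_left) (auto simp: in_keys_iff)

lemma outdeg_add: "outdeg F (x + y) = outdeg F x + outdeg F y"
proof -
  let ?S = "Poly_Mapping.keys x \<union> Poly_Mapping.keys y"
  have "outdeg F (x + y) = (\<Sum>j\<in>?S - F. Poly_Mapping.lookup (x + y) j)"
    by (rule outdeg_eq_sum_superset) (auto simp: keys_add_exponents)
  also have "\<dots> = (\<Sum>j\<in>?S - F. Poly_Mapping.lookup x j) + (\<Sum>j\<in>?S - F. Poly_Mapping.lookup y j)"
    by (simp add: lookup_add sum.distrib)
  also have "\<dots> = outdeg F x + outdeg F y"
    using outdeg_eq_sum_superset[of ?S x F] outdeg_eq_sum_superset[of ?S y F] by simp
  finally show ?thesis .
qed

lemma outdeg_eq_0_iff: "outdeg F u = 0 \<longleftrightarrow> Poly_Mapping.keys u \<subseteq> F"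
  unfolding outdeg_def by (auto simp: in_keys_iff)

lemma mdeg_eq_outdeg_plus:
  "mdeg u = outdeg F u + (\<Sum>j\<in>Poly_Mapping.keys u \<inter> F. Poly_Mapping.lookup u j)"
  unfolding mdeg_def outdeg_def
  using sum.Int_Diff[of "Poly_Mapping.keys u" "Poly_Mapping.lookup u" F] by simp

lemma outdeg_keys_mult_ge:
  assumes "\<forall>x\<in>Poly_Mapping.keys a. p \<le> outdeg F x" "\<forall>y\<in>Poly_Mapping.keys b. q \<le> outdeg F y"
    and "z \<in> Poly_Mapping.keys (a * b :: 'a::comm_ring_1 mpoly)"
  shows "p + q \<le> outdeg F z"
proof -
  obtain x y where "z = x + y" "x \<in> Poly_Mapping.keys a" "y \<in> Poly_Mapping.keys b"
    using keys_mult assms(3) by blast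
  then show ?thesis using assms by (simp add: outdeg_add add_mono)
qed

definition restrict_monoms :: "((nat \<Rightarrow>\<^sub>0 nat) \<Rightarrow> bool) \<Rightarrow> 'a::zero mpoly \<Rightarrow> 'a mpoly" where
  "restrict_monoms Q p = Poly_Mapping.mapp (\<lambda>u c. if Q u then c else 0) p"

lemma lookup_restrict_monoms:
  "Poly_Mapping.lookup (restrict_monoms Q p) u = (if Q u then Poly_Mapping.lookup p u else 0)"
  unfolding restrict_monoms_def by (simp add: lookup_mapp when_def in_keys_iff)

lemma keys_restrict_monoms:
  "Poly_Mapping.keys (restrict_monoms Q p) = {u \<in> Poly_Mapping.keys p. Q u}"
  by (auto simp: in_keys_iff lookup_restrict_monoms split: if_splits)

lemma restrict_monoms_add_compl:
  "restrict_monoms Q p + restrict_monoms (\<lambda>u. \<not> Q u) p = (p :: 'a::monoid_add mpoly)"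
  by (rule poly_mapping_eqI) (simp add: lookup_add lookup_restrict_monoms)

text \<open>The parts of a and b of lowest degree outside F have a nonzero product, and no other pair
  of parts contributes a monomial of that degree.\<close>

lemma keys_mult_min_outdeg:
  fixes a b :: "'a::idom mpoly"
  assumes a: "\<forall>x\<in>Poly_Mapping.keys a. p \<le> outdeg F x" "x0 \<in> Poly_Mapping.keys a" "outdeg F x0 = p"
    and b: "\<forall>y\<in>Poly_Mapping.keys b. q \<le> outdeg F y" "y0 \<in> Poly_Mapping.keys b" "outdeg F y0 = q"
  shows "\<exists>z\<in>Poly_Mapping.keys (a * b). outdeg F z = p + q"
proof -
  define a0 where "a0 = restrict_monoms (\<lambda>u. outdeg F u = p) a"
  define a1 where "a1 = restrict_monoms (\<lambda>u. outdeg F u \<noteq> p) a"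
  define b0 where "b0 = restrict_monoms (\<lambda>u. outdeg F u = q) b"
  define b1 where "b1 = restrict_monoms (\<lambda>u. outdeg F u \<noteq> q) b"
  have ka0: "\<forall>x\<in>Poly_Mapping.keys a0. outdeg F x = p"
    and ka1: "\<forall>x\<in>Poly_Mapping.keys a1. Suc p \<le> outdeg F x"
    and kb0: "\<forall>y\<in>Poly_Mapping.keys b0. outdeg F y = q"
    and kb1: "\<forall>y\<in>Poly_Mapping.keys b1. Suc q \<le> outdeg F y"
    using a(1) b(1) by (auto simp: a0_def a1_def b0_def b1_def keys_restrict_monoms le_Suc_eq)
  have "a0 \<noteq> 0" "b0 \<noteq> 0"
    using a b by (auto simp: a0_def b0_def keys_restrict_monoms simp flip: keys_eq_empty)
  then obtain z where z: "z \<in> Poly_Mapping.keys (a0 * b0)"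
    by (metis keys_eq_empty mult_eq_0_iff equals0I)
  have wz: "outdeg F z = p + q"
    using keys_mult[of a0 b0] z ka0 kb0 by (auto simp: outdeg_add)
  have "a = a0 + a1" "b = b0 + b1"
    unfolding a0_def a1_def b0_def b1_def by (simp_all only: restrict_monoms_add_compl)
  then have ab: "a * b = a0 * b0 + (a0 * b1 + a1 * b)"
    by (simp add: algebra_simps)
  have "z \<notin> Poly_Mapping.keys (a0 * b1)"
    using outdeg_keys_mult_ge[of a0 p F b1 "Suc q" z] ka0 kb1 wz by auto
  moreover have "z \<notin> Poly_Mapping.keys (a1 * b)"
    using outdeg_keys_mult_ge[of a1 "Suc p" F b q z] ka1 b(1) wz by auto
  ultimately have "Poly_Mapping.lookup (a * b) z = Poly_Mapping.lookup (a0 * b0) z"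
    by (simp add: ab lookup_add in_keys_iff)
  then show ?thesis
    using z wz by (metis in_keys_iff)
qed

lemma Q_edgesE:
  assumes "e \<in> Q_edges n"
  obtains i where "1 \<le> i" "i \<le> n - 1" "e = {i, i + 1}" | "e = {n, 1}"
  using assms unfolding Q_edges_def by auto

lemma Q_edgesI: "1 \<le> i \<Longrightarrow> i \<le> n - 1 \<Longrightarrow> {i, i + 1} \<in> Q_edges n" "{n, 1} \<in> Q_edges n"
  unfolding Q_edges_def by blast+

lemma Q_edge_subset_card:
  "n \<ge> 3 \<Longrightarrow> e \<in> Q_edges n \<Longrightarrow> e \<subseteq> {1..n} \<and> finite e \<and> card e = 2"
  by (erule Q_edgesE) auto

lemma B_facetsE:
  assumes "F \<in> B_facets n"
  obtains a e where "a = 0 \<or> a = n + 1" "e \<in> Q_edges n" "F = insert a e"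
  using assms unfolding B_facets_def by blast

lemma B_facetsI: "e \<in> Q_edges n \<Longrightarrow> insert 0 e \<in> B_facets n \<and> insert (n + 1) e \<in> B_facets n"
  unfolding B_facets_def by blast

lemma B_facet_subset_card:
  assumes "n \<ge> 3" "F \<in> B_facets n"
  shows "F \<subseteq> {0..n+1} \<and> finite F \<and> card F = 3"
proof -
  obtain a e where a: "a = 0 \<or> a = n + 1" and e: "e \<in> Q_edges n" and F: "F = insert a e"
    using assms(2) by (rule B_facetsE)
  have "e \<subseteq> {1..n}" "finite e" "card e = 2"
    using Q_edge_subset_card[OF assms(1) e] by auto
  moreover have "a \<notin> e"
    using a \<open>e \<subseteq> {1..n}\<close> by auto
  ultimately show ?thesis
    using a F by auto
qed

lemma B_face_facet: "F \<in> B_facets n \<Longrightarrow> B_face n F"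
  unfolding B_face_def by blast

lemma B_face_subset: "B_face n \<tau> \<Longrightarrow> \<sigma> \<subseteq> \<tau> \<Longrightarrow> B_face n \<sigma>"
  unfolding B_face_def by blast

lemma B_face_card_le_3:
  assumes "n \<ge> 3" "B_face n \<tau>"
  shows "card \<tau> \<le> 3"
proof -
  obtain F where "F \<in> B_facets n" "\<tau> \<subseteq> F"
    using assms(2) unfolding B_face_def by blast
  then show ?thesis
    using card_mono[of F \<tau>] B_facet_subset_card[OF assms(1)] by auto
qed

lemma not_B_face_insert_facet:
  assumes "n \<ge> 3" "F \<in> B_facets n" "j \<notin> F"
  shows "\<not> B_face n (insert j F)"
proof
  assume "B_face n (insert j F)"
  then have "card (insert j F) \<le> 3"
    by (rule B_face_card_le_3[OF assms(1)])
  then show False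
    using B_facet_subset_card[OF assms(1,2)] assms(3) by simp
qed

lemma not_B_face_if_card_ge_3:
  assumes "n \<ge> 3" "\<tau> \<subseteq> {1..n}" "3 \<le> card \<tau>"
  shows "\<not> B_face n \<tau>"
proof
  assume "B_face n \<tau>"
  then obtain F where F: "F \<in> B_facets n" "\<tau> \<subseteq> F"
    unfolding B_face_def by blast
  obtain a e where ae: "a = 0 \<or> a = n + 1" "e \<in> Q_edges n" "F = insert a e"
    using F(1) by (rule B_facetsE)
  then have "\<tau> \<subseteq> e" "finite e" "card e = 2"
    using F(2) assms(2) Q_edge_subset_card[OF assms(1) ae(2)] by auto
  then show False
    using card_mono[of e \<tau>] assms(3) by simp
qed

lemma ex_B_facet_mem:
  assumes "n \<ge> 3" "j \<in> {0..n+1}"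
  shows "\<exists>F\<in>B_facets n. j \<in> F"
proof -
  obtain e where e: "e \<in> Q_edges n" and j: "j \<in> e \<or> j = 0 \<or> j = n + 1"
  proof (cases "1 \<le> j \<and> j \<le> n - 1")
    case True
    then show ?thesis using that[OF Q_edgesI(1)[of j n]] by simp
  next
    case False
    then have "j = n \<or> j = 0 \<or> j = n + 1"
      using assms by auto
    then show ?thesis
      using that[OF Q_edgesI(2)[of n]] by auto
  qed
  then show ?thesis
    using B_facetsI[OF e] by blast
qed

definition ind :: "nat set \<Rightarrow> (nat \<Rightarrow>\<^sub>0 nat)" where
  "ind S = (\<Sum>i\<in>S. Poly_Mapping.single i 1)"

lemma lookup_ind: "finite S \<Longrightarrow> Poly_Mapping.lookup (ind S) i = (if i \<in> S then 1 else 0)"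
  unfolding ind_def by (simp add: lookup_sum lookup_single when_def)

lemma keys_ind: "finite S \<Longrightarrow> Poly_Mapping.keys (ind S) = S"
  by (auto simp: in_keys_iff lookup_ind split: if_splits)

lemma mdeg_ind: "finite S \<Longrightarrow> mdeg (ind S) = card S"
  unfolding mdeg_def by (simp add: keys_ind lookup_ind)

lemma prod_Var_eq_monom_ind:
  "finite \<tau> \<Longrightarrow> (\<Prod>i\<in>\<tau>. Var i) = (monom (ind \<tau>) :: 'a::comm_ring_1 mpoly)"
  by (induction \<tau> rule: finite_induct) (simp_all add: ind_def Var_def mult_single)

lemma prod_Var_mem_PR:
  "finite \<tau> \<Longrightarrow> \<tau> \<subseteq> V \<Longrightarrow> (\<Prod>i\<in>\<tau>. Var i :: 'a::comm_ring_1 mpoly) \<in> PR V"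
  by (simp add: prod_Var_eq_monom_ind PR_single keys_ind)

lemma prod_Var_ne_zero: "finite \<tau> \<Longrightarrow> (\<Prod>i\<in>\<tau>. Var i :: 'a::comm_ring_1 mpoly) \<noteq> 0"
  by (simp add: prod_Var_eq_monom_ind flip: keys_eq_empty)

lemma homogeneous_prod_Var:
  "finite \<tau> \<Longrightarrow> homogeneous (card \<tau>) (\<Prod>i\<in>\<tau>. Var i :: 'a::comm_ring_1 mpoly)"
  by (simp add: prod_Var_eq_monom_ind homogeneous_def mdeg_ind)

lemma prod_Var_mem_SR_ideal:
  assumes "\<tau> \<subseteq> {0..n+1}" "\<not> B_face n \<tau>"
  shows "(\<Prod>i\<in>\<tau>. Var i :: 'a::comm_ring_1 mpoly) \<in> SR_ideal n"
proof -
  have "1 * (\<Prod>i\<in>\<tau>. Var i :: 'a mpoly) \<in> SR_ideal n"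
    unfolding SR_ideal_def using assms by (intro gen_ideal.gen PR_one) blast
  then show ?thesis by simp
qed

lemma not_B_face_keys_SR_ideal:
  assumes "g \<in> (SR_ideal n :: 'a::comm_ring_1 mpoly set)" "u \<in> Poly_Mapping.keys g"
  shows "\<not> B_face n (Poly_Mapping.keys u)"
  using assms(1)[unfolded SR_ideal_def] assms(2)
proof (rule keys_gen_ideal_invariant)
  fix g :: "'a mpoly" and u
  assume "g \<in> {(\<Prod>i\<in>\<tau>. Var i) | \<tau>. \<tau> \<subseteq> {0..n+1} \<and> \<not> B_face n \<tau>}" "u \<in> Poly_Mapping.keys g"
  then obtain \<tau> where "\<tau> \<subseteq> {0..n+1}" "\<not> B_face n \<tau>" "u = ind \<tau>"
    by (auto simp: prod_Var_eq_monom_ind finite_subset)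
  then show "\<not> B_face n (Poly_Mapping.keys u)"
    by (simp add: keys_ind finite_subset)
next
  fix u v :: "nat \<Rightarrow>\<^sub>0 nat"
  assume "\<not> B_face n (Poly_Mapping.keys u)"
  then show "\<not> B_face n (Poly_Mapping.keys (v + u))"
    using B_face_subset by (auto simp: keys_add_exponents)
qed

lemma monom_mem_SR_ideal:
  assumes "Poly_Mapping.keys u \<subseteq> {0..n+1}" "\<not> B_face n (Poly_Mapping.keys u)"
  shows "(monom u :: 'a::comm_ring_1 mpoly) \<in> SR_ideal n"
proof -
  let ?\<tau> = "Poly_Mapping.keys u"
  have "(u - ind ?\<tau>) + ind ?\<tau> = u"
    by (rule poly_mapping_eqI)
      (auto simp: lookup_add lookup_minus lookup_ind in_keys_iff)
  then have u_eq: "monom (u - ind ?\<tau>) * (\<Prod>i\<in>?\<tau>. Var i) = (monom u :: 'a mpoly)"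
    by (simp only: prod_Var_eq_monom_ind finite_keys mult_single mult_1)
  have "Poly_Mapping.keys (u - ind ?\<tau>) \<subseteq> {0..n+1}"
    using assms(1) by (auto simp: in_keys_iff lookup_minus)
  then have "monom (u - ind ?\<tau>) * (\<Prod>i\<in>?\<tau>. Var i) \<in> (SR_ideal n :: 'a mpoly set)"
    unfolding SR_ideal_def
    by (rule gen_ideal_mult_left[OF PR_single prod_Var_mem_SR_ideal[OF assms, unfolded SR_ideal_def]])
  then show ?thesis
    by (simp only: u_eq)
qed

lemma SR_ideal_iff:
  assumes "g \<in> PR {0..n+1}"
  shows "(g :: 'a::comm_ring_1 mpoly) \<in> SR_ideal n
    \<longleftrightarrow> (\<forall>u\<in>Poly_Mapping.keys g. \<not> B_face n (Poly_Mapping.keys u))"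
proof
  assume "\<forall>u\<in>Poly_Mapping.keys g. \<not> B_face n (Poly_Mapping.keys u)"
  moreover have "Poly_Mapping.keys u \<subseteq> {0..n+1}" if "u \<in> Poly_Mapping.keys g" for u
    using assms that unfolding PR_def by blast
  ultimately show "g \<in> SR_ideal n"
    using gen_ideal_if_monoms_mem[OF assms] monom_mem_SR_ideal unfolding SR_ideal_def by blast
qed (use not_B_face_keys_SR_ideal in blast)

lemma outdeg_keys_SR_ideal_pow_ge:
  assumes "B_face n F"
  shows "g \<in> ideal_pow {0..n+1} (SR_ideal n :: 'a::comm_ring_1 mpoly set) m
    \<Longrightarrow> u \<in> Poly_Mapping.keys g \<Longrightarrow> m \<le> outdeg F u"
proof (induction m arbitrary: g u)
  case 0
  then show ?case by simp
next
  case (Suc m)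
  have "g \<in> gen_ideal {0..n+1} {a * b | a b. a \<in> ideal_pow {0..n+1} (SR_ideal n) m \<and> b \<in> SR_ideal n}"
    using Suc.prems(1) by simp
  then show ?case using Suc.prems(2)
  proof (rule keys_gen_ideal_invariant)
    fix g' :: "'a mpoly" and u
    assume "g' \<in> {a * b | a b. a \<in> ideal_pow {0..n+1} (SR_ideal n) m \<and> b \<in> SR_ideal n}"
      and u: "u \<in> Poly_Mapping.keys g'"
    then obtain a b where ab: "g' = a * b" "a \<in> ideal_pow {0..n+1} (SR_ideal n) m" "b \<in> SR_ideal n"
      by blast
    have "\<forall>y\<in>Poly_Mapping.keys b. 1 \<le> outdeg F y"
      using not_B_face_keys_SR_ideal[OF ab(3)] B_face_subset[OF assms] outdeg_eq_0_iff
      by (metis less_one not_le)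
    then show "Suc m \<le> outdeg F u"
      using outdeg_keys_mult_ge[of a m F b 1 u] Suc.IH[OF ab(2)] ab(1) u by simp
  qed (simp add: outdeg_add)
qed

subsection \<open>The facet primes\<close>

text \<open>The monomial prime ideal \<open>(x\<^sub>j : j \<in> V - F)\<close>.\<close>

definition monomial_prime :: "nat set \<Rightarrow> nat set \<Rightarrow> 'a::comm_ring_1 mpoly set" where
  "monomial_prime V F = {g \<in> PR V. \<forall>u\<in>Poly_Mapping.keys g. \<not> Poly_Mapping.keys u \<subseteq> F}"

lemma is_ideal_monomial_prime: "is_ideal V (monomial_prime V F :: 'a::comm_ring_1 mpoly set)"
  unfolding is_ideal_def
proof (intro conjI ballI)
  fix a b :: "'a mpoly" assume "a \<in> monomial_prime V F" "b \<in> monomial_prime V F"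
  then show "a + b \<in> monomial_prime V F"
    using keys_add[of a b] by (auto simp: monomial_prime_def PR_add)
next
  fix a r :: "'a mpoly" assume a: "a \<in> monomial_prime V F" and r: "r \<in> PR V"
  have "\<not> Poly_Mapping.keys z \<subseteq> F" if z: "z \<in> Poly_Mapping.keys (r * a)" for z
  proof -
    obtain x y where "z = x + y" "y \<in> Poly_Mapping.keys a"
      using keys_mult z by blast
    then show ?thesis
      using a by (auto simp: monomial_prime_def keys_add_exponents)
  qed
  then show "r * a \<in> monomial_prime V F"
    using a r by (auto simp: monomial_prime_def PR_mult)
qed (auto simp: monomial_prime_def PR_def)

lemma prime_ideal_monomial_prime: "prime_ideal V (monomial_prime V F :: 'a::idom mpoly set)"
  unfolding prime_ideal_def
proof (intro conjI ballI impI is_ideal_monomial_prime)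
  show "monomial_prime V F \<noteq> (PR V :: 'a mpoly set)"
  proof
    assume P: "monomial_prime V F = (PR V :: 'a mpoly set)"
    have "(1 :: 'a mpoly) \<in> monomial_prime V F"
      by (simp only: P PR_one)
    then show False
      by (simp add: monomial_prime_def)
  qed
next
  fix a b :: "'a mpoly"
  assume ab: "a \<in> PR V" "b \<in> PR V" "a * b \<in> monomial_prime V F"
  show "a \<in> monomial_prime V F \<or> b \<in> monomial_prime V F"
  proof (rule ccontr)
    assume "\<not> (a \<in> monomial_prime V F \<or> b \<in> monomial_prime V F)"
    then obtain x y where "x \<in> Poly_Mapping.keys a" "outdeg F x = 0"
      "y \<in> Poly_Mapping.keys b" "outdeg F y = 0"
      using ab(1,2) by (auto simp: monomial_prime_def outdeg_eq_0_iff)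
    then obtain z where "z \<in> Poly_Mapping.keys (a * b)" "outdeg F z = 0"
      using keys_mult_min_outdeg[of a 0 F x b 0 y] by auto
    then show False
      using ab(3) by (auto simp: monomial_prime_def outdeg_eq_0_iff)
  qed
qed

lemma mult_monom_facet_mem_SR_ideal:
  assumes n: "n \<ge> 3" and F: "F \<in> B_facets n" and g: "g \<in> monomial_prime {0..n+1} F"
  shows "g * monom (ind F) \<in> (SR_ideal n :: 'a::comm_ring_1 mpoly set)"
proof -
  have fin: "finite F"
    using B_facet_subset_card[OF n F] by blast
  have "\<not> B_face n (Poly_Mapping.keys z)" if z: "z \<in> Poly_Mapping.keys (g * monom (ind F))" for z
  proof -
    obtain x where x: "z = x + ind F" "x \<in> Poly_Mapping.keys g"
      using keys_mult[of g "monom (ind F)"] z by auto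
    then obtain j where "j \<in> Poly_Mapping.keys x" "j \<notin> F"
      using g by (auto simp: monomial_prime_def)
    moreover have "insert j F \<subseteq> Poly_Mapping.keys z"
      using calculation x(1) by (auto simp: keys_add_exponents keys_ind[OF fin])
    ultimately show ?thesis
      using not_B_face_insert_facet[OF n F] B_face_subset by blast
  qed
  moreover have "g \<in> PR {0..n+1}"
    using g by (simp add: monomial_prime_def)
  moreover have "monom (ind F) \<in> (PR {0..n+1} :: 'a mpoly set)"
    using B_facet_subset_card[OF n F] by (simp add: PR_single keys_ind)
  ultimately show ?thesis
    by (simp add: SR_ideal_iff PR_mult)
qed

lemma mem_monomial_prime_if_mult_monom_face_mem:
  assumes F: "finite F" "B_face n F"
    and g: "g \<in> PR {0..n+1}" "g * monom (ind F) \<in> (SR_ideal n :: 'a::comm_ring_1 mpoly set)"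
  shows "g \<in> monomial_prime {0..n+1} F"
proof -
  have "\<not> Poly_Mapping.keys u \<subseteq> F" if u: "u \<in> Poly_Mapping.keys g" for u
  proof
    assume "Poly_Mapping.keys u \<subseteq> F"
    then have "Poly_Mapping.keys (ind F + u) = F"
      by (auto simp: keys_add_exponents keys_ind[OF F(1)])
    moreover have "monom (ind F) * g \<in> SR_ideal n"
      using g(2) by (simp add: mult.commute)
    ultimately show False
      using not_B_face_keys_SR_ideal in_keys_monom_mult[OF u] F(2) by fastforce
  qed
  then show ?thesis
    using g(1) by (simp add: monomial_prime_def)
qed

lemma monomial_prime_mem_Ass:
  assumes n: "n \<ge> 3" and F: "F \<in> B_facets n"
  shows "monomial_prime {0..n+1} F \<in> Ass {0..n+1} (SR_ideal n :: 'a::idom mpoly set)"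
proof -
  have F_props: "F \<subseteq> {0..n+1}" "finite F"
    using B_facet_subset_card[OF n F] by auto
  have "monomial_prime {0..n+1} F = {g \<in> PR {0..n+1}. g * monom (ind F) \<in> (SR_ideal n :: 'a mpoly set)}"
    using mult_monom_facet_mem_SR_ideal[OF n F]
      mem_monomial_prime_if_mult_monom_face_mem[OF F_props(2) B_face_facet[OF F]]
    by (auto simp: monomial_prime_def)
  moreover have "monom (ind F) \<in> (PR {0..n+1} :: 'a mpoly set)"
    using F_props by (simp add: PR_single keys_ind)
  ultimately show ?thesis
    unfolding Ass_def using prime_ideal_monomial_prime by blast
qed

subsection \<open>The lower bound\<close>

lemma ex_B_facet_outdeg_less:
  assumes n: "n \<ge> 3" and u: "Poly_Mapping.keys u \<subseteq> {0..n+1}" "mdeg u \<le> m" and m: "1 \<le> m"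
  shows "\<exists>F\<in>B_facets n. outdeg F u < m"
proof (cases "Poly_Mapping.keys u = {}")
  case True
  then show ?thesis
    using ex_B_facet_mem[OF n, of 0] m by (auto simp: outdeg_def)
next
  case False
  then obtain j where j: "j \<in> Poly_Mapping.keys u"
    by blast
  then obtain F where F: "F \<in> B_facets n" "j \<in> F"
    using ex_B_facet_mem[OF n] u(1) by blast
  have "1 \<le> Poly_Mapping.lookup u j"
    using j by (simp add: in_keys_iff)
  also have "\<dots> \<le> (\<Sum>j\<in>Poly_Mapping.keys u \<inter> F. Poly_Mapping.lookup u j)"
    using j F(2) by (intro member_le_sum) auto
  finally have "outdeg F u < mdeg u"
    using mdeg_eq_outdeg_plus[of u F] by linarith
  then show ?thesis
    using F(1) u(2) less_le_trans by blast
qed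

lemma mdeg_keys_symb_pow_gt:
  fixes f :: "'a::idom mpoly"
  assumes n: "n \<ge> 3" and m: "1 \<le> m"
    and f: "f \<in> symb_pow {0..n+1} (SR_ideal n) m" and u: "u \<in> Poly_Mapping.keys f"
  shows "m < mdeg u"
proof (rule ccontr)
  assume "\<not> m < mdeg u"
  moreover have "Poly_Mapping.keys u \<subseteq> {0..n+1}"
    using f u by (auto simp: symb_pow_def PR_def)
  ultimately obtain F where F: "F \<in> B_facets n" and uF: "outdeg F u < m"
    using ex_B_facet_outdeg_less[OF n _ _ m] by force
  obtain s where s: "s \<in> PR {0..n+1}" "s \<notin> monomial_prime {0..n+1} F"
    and sf: "s * f \<in> ideal_pow {0..n+1} (SR_ideal n) m"
    using f monomial_prime_mem_Ass[OF n F] unfolding symb_pow_def by blast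
  obtain x where x: "x \<in> Poly_Mapping.keys s" "outdeg F x = 0"
    using s by (auto simp: monomial_prime_def outdeg_eq_0_iff)
  define v where "v = Min (outdeg F ` Poly_Mapping.keys f)"
  have v: "\<forall>y\<in>Poly_Mapping.keys f. v \<le> outdeg F y" "v \<in> outdeg F ` Poly_Mapping.keys f"
    using u unfolding v_def by (auto intro: Min_in)
  then obtain z where z: "z \<in> Poly_Mapping.keys (s * f)" "outdeg F z = v"
    using keys_mult_min_outdeg[of s 0 F x f v] x by auto
  have "m \<le> outdeg F z"
    using outdeg_keys_SR_ideal_pow_ge[OF B_face_facet[OF F] sf z(1)] .
  then show False
    using z(2) v(1) u uF by fastforce
qed

lemma symb_pow_SR_ideal_degree_gt:
  fixes f :: "'a::idom mpoly"
  assumes "n \<ge> 3" "1 \<le> m" "f \<in> symb_pow {0..n+1} (SR_ideal n) m" "f \<noteq> 0" "homogeneous d f"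
  shows "m < d"
proof -
  obtain u where "u \<in> Poly_Mapping.keys f"
    using assms(4) by fastforce
  then show ?thesis
    using mdeg_keys_symb_pow_gt[OF assms(1-3)] assms(5) unfolding homogeneous_def by fastforce
qed

subsection \<open>The upper bound\<close>

lemma Ass_SR_ideal_ex_edge_not_mem:
  assumes n: "n \<ge> 3" and P: "P \<in> Ass {0..n+1} (SR_ideal n :: 'a::comm_ring_1 mpoly set)"
  shows "\<exists>e\<in>Q_edges n. (\<Prod>i\<in>e. Var i) \<notin> P"
proof -
  obtain h where prime: "prime_ideal {0..n+1} P" and h: "h \<in> PR {0..n+1}"
    and P_eq: "P = {g \<in> PR {0..n+1}. g * h \<in> SR_ideal n}"
    using P unfolding Ass_def by blast
  have "h \<notin> SR_ideal n"
  proof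
    assume "h \<in> SR_ideal n"
    then have "P = PR {0..n+1}"
      using gen_ideal_mult_left unfolding P_eq SR_ideal_def by blast
    then show False
      using prime unfolding prime_ideal_def by blast
  qed
  then obtain u where u: "u \<in> Poly_Mapping.keys h" "B_face n (Poly_Mapping.keys u)"
    using SR_ideal_iff[OF h] by blast
  then obtain F where F: "F \<in> B_facets n" "Poly_Mapping.keys u \<subseteq> F"
    unfolding B_face_def by blast
  then obtain a e where e: "e \<in> Q_edges n" "F = insert a e"
    by (auto elim: B_facetsE)
  have fin: "finite e"
    using Q_edge_subset_card[OF n e(1)] by blast
  have "Poly_Mapping.keys (ind e + u) \<subseteq> F"
    using F(2) e(2) by (auto simp: keys_add_exponents keys_ind[OF fin])
  then have "\<not> (\<Prod>i\<in>e. Var i) * h \<in> SR_ideal n"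
    using not_B_face_keys_SR_ideal in_keys_monom_mult[OF u(1)] B_face_subset B_face_facet[OF F(1)]
    unfolding prod_Var_eq_monom_ind[OF fin] by blast
  then show ?thesis
    using e(1) P_eq by blast
qed

lemma edge_power_mult_prod_Var_mem_SR_ideal_pow:
  assumes n: "n \<ge> 3" and e: "e \<in> Q_edges n" and K: "K \<subseteq> {1..n} - e"
  shows "(\<Prod>i\<in>e. Var i) ^ card K * (\<Prod>j\<in>K. Var j)
    \<in> ideal_pow {0..n+1} (SR_ideal n :: 'a::comm_ring_1 mpoly set) (card K)"
proof -
  have e_props: "e \<subseteq> {1..n}" "finite e" "card e = 2"
    using Q_edge_subset_card[OF n e] by auto
  have fin: "finite K"
    using K finite_subset by blast
  have eq: "(\<Prod>i\<in>e. Var i) ^ card K * (\<Prod>j\<in>K. Var j) = (\<Prod>j\<in>K. \<Prod>i\<in>insert j e. Var i :: 'a mpoly)"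
    using K e_props(2) by (simp add: prod.distrib mult.commute subset_iff)
  have mem: "(\<Prod>i\<in>insert j e. Var i :: 'a mpoly) \<in> SR_ideal n" if "j \<in> K" for j
  proof (rule prod_Var_mem_SR_ideal)
    show "insert j e \<subseteq> {0..n+1}"
      using that K e_props(1) by auto
    show "\<not> B_face n (insert j e)"
      using that K e_props by (intro not_B_face_if_card_ge_3[OF n]) auto
  qed
  show ?thesis
    unfolding eq by (rule prod_mem_ideal_pow[OF fin mem])
qed

definition odd_vertices :: "nat \<Rightarrow> nat set" where
  "odd_vertices k = (\<lambda>i. 2 * i + 1) ` {..<k}"

lemma odd_vertices_props:
  assumes "2 * k \<le> n"
  shows "finite (odd_vertices k)" "card (odd_vertices k) = k" "odd_vertices k \<subseteq> {1..n}"
proof -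
  have "inj_on (\<lambda>i::nat. 2 * i + 1) {..<k}"
    by (auto simp: inj_on_def)
  then show "card (odd_vertices k) = k"
    by (simp add: odd_vertices_def card_image)
  show "odd_vertices k \<subseteq> {1..n}"
    using assms by (auto simp: odd_vertices_def)
qed (simp add: odd_vertices_def)

lemma card_odd_vertices_Int_Q_edge:
  assumes "2 * k \<le> n" "e \<in> Q_edges n"
  shows "card (odd_vertices k \<inter> e) \<le> 1"
proof -
  have "x = y" if "x \<in> odd_vertices k \<inter> e" "y \<in> odd_vertices k \<inter> e" for x y
    using assms(2)
  proof (cases rule: Q_edgesE)
    case 1
    moreover have "odd x" "odd y"
      using that by (auto simp: odd_vertices_def)
    ultimately show ?thesis
      using that by auto
  next
    case 2
    then show ?thesis
      using that assms(1) by (auto simp: odd_vertices_def)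
  qed
  moreover have "finite (odd_vertices k \<inter> e)"
    by (simp add: odd_vertices_def)
  ultimately show ?thesis
    by (auto simp: card_le_Suc0_iff_eq)
qed

lemma Ass_SR_ideal_ex_multiplier_prod_odd_vertices:
  assumes n: "n \<ge> 3" and k: "2 * k \<le> n"
    and P: "P \<in> Ass {0..n+1} (SR_ideal n :: 'a::comm_ring_1 mpoly set)"
  shows "\<exists>s\<in>PR {0..n+1} - P. s * (\<Prod>j\<in>odd_vertices k. Var j)
    \<in> ideal_pow {0..n+1} (SR_ideal n) (k - 1)"
proof -
  let ?J = "odd_vertices k"
  note J = odd_vertices_props[OF k]
  obtain e where e: "e \<in> Q_edges n" "(\<Prod>i\<in>e. Var i) \<notin> P"
    using Ass_SR_ideal_ex_edge_not_mem[OF n P] by blast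
  let ?xe = "\<Prod>i\<in>e. Var i :: 'a mpoly"
  have xe: "?xe \<in> PR {0..n+1}"
    using Q_edge_subset_card[OF n e(1)] by (intro prod_Var_mem_PR) auto
  have "card ?J - card (?J \<inter> e) \<le> card (?J - e)"
    using J(1) by (simp add: card_Diff_subset_Int)
  then have "k - 1 \<le> card (?J - e)"
    using J(2) card_odd_vertices_Int_Q_edge[OF k e(1)] by linarith
  then obtain K where K: "K \<subseteq> ?J - e" "card K = k - 1"
    by (rule obtain_subset_with_card_n)
  have "(\<Prod>j\<in>?J. Var j) = (\<Prod>j\<in>?J - K. Var j) * (\<Prod>j\<in>K. Var j :: 'a mpoly)"
    by (rule prod.subset_diff) (use K(1) J(1) in auto)
  then have "?xe ^ (k - 1) * (\<Prod>j\<in>?J. Var j)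
      = (\<Prod>j\<in>?J - K. Var j) * (?xe ^ card K * (\<Prod>j\<in>K. Var j))"
    using K(2) by (simp add: algebra_simps)
  also have "\<dots> \<in> ideal_pow {0..n+1} (SR_ideal n) (k - 1)"
  proof (rule ideal_pow_mult_left)
    show "(\<Prod>j\<in>?J - K. Var j :: 'a mpoly) \<in> PR {0..n+1}"
      using J(1,3) by (intro prod_Var_mem_PR) auto
    show "?xe ^ card K * (\<Prod>j\<in>K. Var j) \<in> ideal_pow {0..n+1} (SR_ideal n) (k - 1)"
      using edge_power_mult_prod_Var_mem_SR_ideal_pow[OF n e(1), of K] K J(3) by auto
  qed
  finally show ?thesis
    using prime_ideal_power_not_mem[OF _ xe e(2)] P PR_power[OF xe]
    unfolding Ass_def by blast
qed

lemma prod_odd_vertices_mem_symb_pow: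
  assumes "n \<ge> 3" "2 * k \<le> n"
  shows "(\<Prod>j\<in>odd_vertices k. Var j)
    \<in> symb_pow {0..n+1} (SR_ideal n :: 'a::comm_ring_1 mpoly set) (k - 1)"
proof -
  have "(\<Prod>j\<in>odd_vertices k. Var j :: 'a mpoly) \<in> PR {0..n+1}"
    using odd_vertices_props[OF assms(2)] by (intro prod_Var_mem_PR) auto
  then show ?thesis
    using Ass_SR_ideal_ex_multiplier_prod_odd_vertices[OF assms] unfolding symb_pow_def by blast
qed

theorem proposition3p15:
  fixes k t :: nat
  assumes "k \<ge> 2"
  shows "alpha_nm TYPE('a::field) (2 * k + t) (k - 1) = k"
proof -
  define n where "n = 2 * k + t"
  have n: "n \<ge> 3" "2 * k \<le> n" and m: "1 \<le> k - 1"
    using assms by (simp_all add: n_def)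
  note J = odd_vertices_props[OF n(2)]
  have "alpha (symb_pow {0..n+1} (SR_ideal n :: 'a mpoly set) (k - 1)) = k"
  proof (rule alpha_eqI)
    show "(\<Prod>j\<in>odd_vertices k. Var j :: 'a mpoly) \<in> symb_pow {0..n+1} (SR_ideal n) (k - 1)"
      by (rule prod_odd_vertices_mem_symb_pow[OF n])
    show "(\<Prod>j\<in>odd_vertices k. Var j :: 'a mpoly) \<noteq> 0"
      by (rule prod_Var_ne_zero[OF J(1)])
    show "homogeneous k (\<Prod>j\<in>odd_vertices k. Var j :: 'a mpoly)"
      using homogeneous_prod_Var[OF J(1)] J(2) by simp
    show "k \<le> d" if "g \<in> symb_pow {0..n+1} (SR_ideal n) (k - 1)" "g \<noteq> 0" "homogeneous d g"
      for g :: "'a mpoly" and d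
      using symb_pow_SR_ideal_degree_gt[OF n(1) m that] by simp
  qed
  then show ?thesis
    unfolding alpha_nm_def n_def .
qed

end
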